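(* Every solution of system (CSF) has bounded velocities: there is a constant $C<\infty$, depending only on the initial data and the parameters, such that $\max_i|\mathbf v_i(t)|\le C$ for all $t\ge0$.
   Context: Fix integers $N\ge1$, $n\ge1$, masses $m_1,\dots,m_N>0$ with $M=\sum_i m_i$, parameters $\sigma>0$, $p>0$, $\kappa\ge0$, and a communication kernel $\phi:[0,\infty)\to(0,\infty)$ that is smooth, positive and non-increasing. Write $\phi_{ij}=\phi(|\mathbf x_i-\mathbf x_j|)$, with $|\cdot|$ the Euclidean norm on $\mathbb R^n$. System (CSF) is, for $i=1,\dots,N$, $$\dot{\mathbf x}_i=\mathbf v_i,\qquad \dot{\mathbf v}_i=\sum_{j=1}^N m_j\phi_{ij}(\mathbf v_j-\mathbf v_i)+\sigma(\theta_i-|\mathbf v_i|^p)\mathbf v_i,\qquad \dot\theta_i=\kappa\sum_{j=1}^N m_j\phi_{ij}(\theta_j-\theta_i),$$ with $\mathbf x_i,\mathbf v_i\in\mathbb R^n$ and initial values $\theta_i(0)>0$; solutions are considered for $t\ge0$. *)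

theory Defs
  imports "HOL-Analysis.Analysis"
begin

definition smooth_on_real :: "(real \<Rightarrow> real) \<Rightarrow> real set \<Rightarrow> bool" where
  "smooth_on_real f S \<longleftrightarrow>
     (\<exists>D::nat \<Rightarrow> real \<Rightarrow> real. D 0 = f \<and>
        (\<forall>k. \<forall>t\<in>S. (D k has_real_derivative D (Suc k) t) (at t within S)))"

definition CSF_solution ::
  "nat \<Rightarrow> (nat \<Rightarrow> real) \<Rightarrow> real \<Rightarrow> real \<Rightarrow> real \<Rightarrow> (real \<Rightarrow> real)
   \<Rightarrow> (nat \<Rightarrow> real \<Rightarrow> real^'n) \<Rightarrow> (nat \<Rightarrow> real \<Rightarrow> real^'n) \<Rightarrow> (nat \<Rightarrow> real \<Rightarrow> real) \<Rightarrow> bool"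
where
  "CSF_solution N m \<sigma> p \<kappa> \<phi> x v \<theta> \<longleftrightarrow>
    (\<forall>i<N. \<forall>t\<ge>0.
       (x i has_vector_derivative v i t) (at t within {0..}) \<and>
       (v i has_vector_derivative
          ((\<Sum>j<N. (m j * \<phi> (norm (x i t - x j t))) *\<^sub>R (v j t - v i t))
           + (\<sigma> * (\<theta> i t - norm (v i t) powr p)) *\<^sub>R v i t)) (at t within {0..}) \<and>
       (\<theta> i has_real_derivative
          (\<kappa> * (\<Sum>j<N. m j * \<phi> (norm (x i t - x j t)) * (\<theta> j t - \<theta> i t)))) (at t within {0..}))"

end

theory Submission imports Defs begin

text \<open>The temperatures obey a consensus equation, so by the maximum principle they never exceed
  their initial maximum \<Theta>. For the speeds, look at a fastest particle: alignment only pulls it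
  towards slower particles, and once its speed exceeds \<Theta> powr (1/p) the friction term
  \<sigma> (\<theta> - |v| powr p) v decelerates it. Hence max_i |v_i|^2 never exceeds
  max (max_i |v_i(0)|, \<Theta> powr (1/p))^2. The maximum principle itself is a first-crossing-time
  argument for a strict barrier, combined with a tilt by - \<epsilon> t.\<close>

lemma has_real_derivative_inner_self:
  fixes v :: "real \<Rightarrow> 'a::real_inner"
  assumes "(v has_vector_derivative v') (at t within S)"
  shows "((\<lambda>t. v t \<bullet> v t) has_real_derivative 2 * (v t \<bullet> v')) (at t within S)"
proof -
  have d: "(v has_derivative (\<lambda>h. h *\<^sub>R v')) (at t within S)"
    using assms by (simp add: has_vector_derivative_def)
  have "((\<lambda>t. v t \<bullet> v t) has_derivative (\<lambda>h. v t \<bullet> (h *\<^sub>R v') + (h *\<^sub>R v') \<bullet> v t)) (at t within S)"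
    by (rule has_derivative_inner[OF d d])
  moreover have "(\<lambda>h. v t \<bullet> (h *\<^sub>R v') + (h *\<^sub>R v') \<bullet> v t) = (\<lambda>h. (2 * (v t \<bullet> v')) * h)"
    by (auto simp: inner_commute algebra_simps)
  ultimately show ?thesis by (simp add: has_field_derivative_def)
qed

lemma first_crossing_time:
  fixes g :: "nat \<Rightarrow> real \<Rightarrow> real"
  assumes cont: "\<forall>i<N. continuous_on {0..} (g i)"
    and init: "\<forall>i<N. g i 0 < L"
    and crossing: "i0 < N" "t0 \<ge> 0" "L \<le> g i0 t0"
  obtains ts i where "ts > 0" "i < N" "g i ts = L" "\<forall>j<N. g j ts \<le> L"
    "\<forall>j<N. \<forall>s\<in>{0..<ts}. g j s < L"
proof -
  define S where "S = (\<Union>i<N. {t \<in> {0..}. L \<le> g i t})"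
  have "closed S" unfolding S_def
    using cont by (intro closed_UN ballI continuous_on_closed_Collect_le continuous_on_const) auto
  moreover have "t0 \<in> S" using crossing by (auto simp: S_def)
  moreover have bdd: "bdd_below S" unfolding S_def by (auto intro!: bdd_belowI[of _ 0])
  ultimately have "Inf S \<in> S" using closed_contains_Inf by blast
  then obtain i where i: "i < N" "Inf S \<ge> 0" "L \<le> g i (Inf S)" by (auto simp: S_def)
  have below: "\<forall>j<N. \<forall>s\<in>{0..<Inf S}. g j s < L"
    using cInf_lower[OF _ bdd] by (force simp: S_def)
  have pos: "Inf S > 0"
    using i init by (metis less_eq_real_def not_le)
  have at_most: "\<forall>j<N. g j (Inf S) \<le> L"
  proof (intro allI impI)
    fix j assume "j < N"
    show "g j (Inf S) \<le> L"
    proof (rule tendsto_upperbound)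
      have "isCont (g j) (Inf S)"
        using cont \<open>j < N\<close> pos by (intro continuous_on_interior[of "{0..}"]) auto
      thus "(g j \<longlongrightarrow> g j (Inf S)) (at_left (Inf S))"
        by (simp add: isCont_def filterlim_at_split)
      show "\<forall>\<^sub>F s in at_left (Inf S). g j s \<le> L"
        using eventually_at_left_real[OF pos]
        by eventually_elim (use below \<open>j < N\<close> in \<open>auto intro: less_imp_le\<close>)
    qed simp
  qed
  have "g i (Inf S) = L" using i at_most by (meson order_antisym)
  from that[OF pos i(1) this at_most below] show ?thesis .
qed

lemma stays_strictly_below:
  fixes g g' :: "nat \<Rightarrow> real \<Rightarrow> real"
  assumes der: "\<forall>i<N. \<forall>t\<ge>0. (g i has_real_derivative g' i t) (at t within {0..})"
    and init: "\<forall>i<N. g i 0 < L"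
    and inward: "\<forall>i<N. \<forall>t>0. (\<forall>j<N. g j t \<le> L) \<longrightarrow> g i t = L \<longrightarrow> g' i t < 0"
  shows "\<forall>i<N. \<forall>t\<ge>0. g i t < L"
proof (rule ccontr)
  assume "\<not> ?thesis"
  then obtain i0 t0 where crossing: "i0 < N" "t0 \<ge> 0" "L \<le> g i0 t0" by force
  have cont: "\<forall>i<N. continuous_on {0..} (g i)"
    using der by (auto simp: continuous_on_eq_continuous_within intro: DERIV_continuous)
  obtain ts i where ts: "ts > 0" "i < N" "g i ts = L" "\<forall>j<N. g j ts \<le> L"
    and below: "\<forall>j<N. \<forall>s\<in>{0..<ts}. g j s < L"
    by (rule first_crossing_time[OF cont init crossing])
  have "(g i has_real_derivative g' i ts) (at ts within {0..})" "g' i ts < 0"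
    using der inward ts by auto
  then obtain d where d: "d > 0" "\<forall>h>0. ts - h \<in> {0..} \<longrightarrow> h < d \<longrightarrow> g i ts < g i (ts - h)"
    using has_real_derivative_neg_dec_left by blast
  define s where "s = ts - min d ts / 2"
  have "s \<in> {0..<ts}" "ts - s < d" using d ts by (auto simp: s_def)
  hence "L < g i s" using d(2)[rule_format, of "ts - s"] ts by auto
  moreover have "g i s < L" using below ts(2) \<open>s \<in> {0..<ts}\<close> by blast
  ultimately show False by simp
qed

lemma max_principle:
  fixes g g' :: "nat \<Rightarrow> real \<Rightarrow> real"
  assumes der: "\<forall>i<N. \<forall>t\<ge>0. (g i has_real_derivative g' i t) (at t within {0..})"
    and init: "\<forall>i<N. g i 0 \<le> L"
    and nonincreasing_at_max:
      "\<forall>i<N. \<forall>t>0. (\<forall>j<N. g j t \<le> g i t) \<longrightarrow> L < g i t \<longrightarrow> g' i t \<le> 0"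
  shows "\<forall>i<N. \<forall>t\<ge>0. g i t \<le> L"
proof (intro allI impI, rule ccontr)
  fix i t assume it: "i < N" "t \<ge> 0" "\<not> g i t \<le> L"
  define \<epsilon> where "\<epsilon> = (g i t - L) / (2 * (1 + t))"
  have \<epsilon>: "\<epsilon> > 0" unfolding \<epsilon>_def using it by (intro divide_pos_pos) auto
  \<comment> \<open>Tilting every g j by - \<epsilon> s makes the derivative strictly negative at a touching point.\<close>
  have "\<forall>i<N. \<forall>t\<ge>0. g i t - \<epsilon> * t < L + \<epsilon>"
  proof (rule stays_strictly_below[where g' = "\<lambda>i t. g' i t - \<epsilon>"])
    show "\<forall>i<N. \<forall>t\<ge>0. ((\<lambda>t. g i t - \<epsilon> * t) has_real_derivative g' i t - \<epsilon>) (at t within {0..})"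
    proof (intro allI impI)
      fix k s assume "k < N" "(s::real) \<ge> 0"
      with der have "(g k has_real_derivative g' k s) (at s within {0..})" by blast
      from DERIV_diff[OF this DERIV_cmult[OF DERIV_ident, of \<epsilon>]]
      show "((\<lambda>t. g k t - \<epsilon> * t) has_real_derivative g' k s - \<epsilon>) (at s within {0..})" by simp
    qed
    show "\<forall>i<N. g i 0 - \<epsilon> * 0 < L + \<epsilon>" using init \<epsilon> by force
    show "\<forall>k<N. \<forall>s>0. (\<forall>j<N. g j s - \<epsilon> * s \<le> L + \<epsilon>) \<longrightarrow> g k s - \<epsilon> * s = L + \<epsilon> \<longrightarrow>
        g' k s - \<epsilon> < 0"
    proof (intro allI impI)
      fix k s assume k: "k < N" "(s::real) > 0" "\<forall>j<N. g j s - \<epsilon> * s \<le> L + \<epsilon>"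
        "g k s - \<epsilon> * s = L + \<epsilon>"
      have "\<forall>j<N. g j s \<le> g k s" using k(3,4) by force
      moreover have "L < g k s" using k(2,4) \<epsilon> by (smt (verit) mult_pos_pos)
      ultimately have "g' k s \<le> 0" using nonincreasing_at_max k(1,2) by blast
      thus "g' k s - \<epsilon> < 0" using \<epsilon> by simp
    qed
  qed
  hence "g i t - \<epsilon> * t < L + \<epsilon>" using it by blast
  hence "g i t < L + \<epsilon> * (1 + t)" by (simp add: algebra_simps)
  also have "\<epsilon> * (1 + t) = (g i t - L) / 2" using it(2) by (simp add: \<epsilon>_def field_simps)
  finally show False using it by (simp add: field_simps)
qed

lemma weighted_sum_diff_nonpos:
  fixes w a :: "'i \<Rightarrow> real"
  assumes "\<forall>j\<in>J. 0 \<le> w j" and "\<forall>j\<in>J. a j \<le> c"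
  shows "(\<Sum>j\<in>J. w j * (a j - c)) \<le> 0"
  using assms by (intro sum_nonpos) (simp add: mult_nonneg_nonpos)

lemma inner_alignment_friction_nonpos:
  fixes u :: "'a::real_inner" and u' :: "'i \<Rightarrow> 'a" and w :: "'i \<Rightarrow> real"
  assumes w: "\<forall>j\<in>J. 0 \<le> w j" and slower: "\<forall>j\<in>J. norm (u' j) \<le> norm u"
    and "\<sigma> \<ge> 0" and "\<theta> \<le> norm u powr p"
  shows "u \<bullet> ((\<Sum>j\<in>J. w j *\<^sub>R (u' j - u)) + (\<sigma> * (\<theta> - norm u powr p)) *\<^sub>R u) \<le> 0"
proof -
  have "u \<bullet> u' j \<le> u \<bullet> u" if "j \<in> J" for j
  proof -
    have "u \<bullet> u' j \<le> norm u * norm (u' j)" by (rule norm_cauchy_schwarz)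
    also have "\<dots> \<le> norm u * norm u" using slower that by (simp add: mult_left_mono)
    finally show ?thesis by (simp add: dot_square_norm power2_eq_square)
  qed
  hence "(\<Sum>j\<in>J. w j * (u \<bullet> u' j - u \<bullet> u)) \<le> 0"
    using w by (intro weighted_sum_diff_nonpos) auto
  moreover have "\<sigma> * (\<theta> - norm u powr p) * (u \<bullet> u) \<le> 0"
    using assms(3,4) by (simp add: mult_nonneg_nonpos mult_nonpos_nonneg)
  ultimately show ?thesis
    by (simp add: inner_add_right inner_sum_right inner_diff_right)
qed

lemma powr_inverse_less_imp_le_powr:
  fixes a r p :: real
  assumes "p > 0" and "a powr (1/p) < r"
  shows "a \<le> r powr p"
proof (cases "a > 0")
  case True
  hence "a = (a powr (1/p)) powr p" using assms(1) by (simp add: powr_powr)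
  also have "\<dots> \<le> r powr p" using assms by (intro powr_mono2) auto
  finally show ?thesis .
qed (use powr_ge_zero[of r p] in linarith)

lemma CSF_temperature_le_initial_max:
  assumes "\<forall>i<N. m i \<ge> 0" and "\<kappa> \<ge> 0" and "\<forall>r\<ge>0. \<phi> r \<ge> 0"
    and sol: "CSF_solution N m \<sigma> p \<kappa> \<phi> x v \<theta>"
  shows "\<forall>i<N. \<forall>t\<ge>0. \<theta> i t \<le> Max ((\<lambda>j. \<theta> j 0) ` {..<N})"
proof (rule max_principle)
  show "\<forall>i<N. \<forall>t\<ge>0. (\<theta> i has_real_derivative
      \<kappa> * (\<Sum>j<N. m j * \<phi> (norm (x i t - x j t)) * (\<theta> j t - \<theta> i t))) (at t within {0..})"
    using sol by (simp add: CSF_solution_def)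
  show "\<forall>i<N. \<theta> i 0 \<le> Max ((\<lambda>j. \<theta> j 0) ` {..<N})" by simp
  show "\<forall>i<N. \<forall>t>0. (\<forall>j<N. \<theta> j t \<le> \<theta> i t) \<longrightarrow> Max ((\<lambda>j. \<theta> j 0) ` {..<N}) < \<theta> i t \<longrightarrow>
      \<kappa> * (\<Sum>j<N. m j * \<phi> (norm (x i t - x j t)) * (\<theta> j t - \<theta> i t)) \<le> 0"
  proof (intro allI impI)
    fix i t assume "\<forall>j<N. \<theta> j t \<le> \<theta> i t"
    hence "(\<Sum>j<N. m j * \<phi> (norm (x i t - x j t)) * (\<theta> j t - \<theta> i t)) \<le> 0"
      using assms(1,3) by (intro weighted_sum_diff_nonpos) auto
    thus "\<kappa> * (\<Sum>j<N. m j * \<phi> (norm (x i t - x j t)) * (\<theta> j t - \<theta> i t)) \<le> 0"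
      using assms(2) by (simp add: mult_nonneg_nonpos)
  qed
qed

lemma CSF_speed_le:
  assumes "\<forall>i<N. m i \<ge> 0" and "\<sigma> \<ge> 0" and "p > 0" and "\<forall>r\<ge>0. \<phi> r \<ge> 0"
    and temperature: "\<forall>i<N. \<forall>t\<ge>0. \<theta> i t \<le> \<Theta>"
    and sol: "CSF_solution N m \<sigma> p \<kappa> \<phi> x v \<theta>"
  shows "\<forall>i<N. \<forall>t\<ge>0. norm (v i t) \<le> max (Max ((\<lambda>j. norm (v j 0)) ` {..<N})) (\<Theta> powr (1/p))"
    (is "\<forall>i<N. \<forall>t\<ge>0. _ \<le> ?R")
proof -
  define F where "F i t = (\<Sum>j<N. (m j * \<phi> (norm (x i t - x j t))) *\<^sub>R (v j t - v i t))
    + (\<sigma> * (\<theta> i t - norm (v i t) powr p)) *\<^sub>R v i t" for i t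
  have bound_sq: "\<forall>i<N. \<forall>t\<ge>0. v i t \<bullet> v i t \<le> ?R\<^sup>2"
  proof (rule max_principle[where g' = "\<lambda>i t. 2 * (v i t \<bullet> F i t)"])
    show "\<forall>i<N. \<forall>t\<ge>0. ((\<lambda>t. v i t \<bullet> v i t) has_real_derivative 2 * (v i t \<bullet> F i t)) (at t within {0..})"
      using sol unfolding CSF_solution_def F_def by (blast intro: has_real_derivative_inner_self)
    show "\<forall>i<N. v i 0 \<bullet> v i 0 \<le> ?R\<^sup>2"
    proof (intro allI impI)
      fix i assume "i < N"
      hence "norm (v i 0) \<le> ?R" by (simp add: le_max_iff_disj)
      thus "v i 0 \<bullet> v i 0 \<le> ?R\<^sup>2" by (simp add: power2_norm_eq_inner[symmetric] power_mono)
    qed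
    show "\<forall>i<N. \<forall>t>0. (\<forall>j<N. v j t \<bullet> v j t \<le> v i t \<bullet> v i t) \<longrightarrow> ?R\<^sup>2 < v i t \<bullet> v i t \<longrightarrow>
        2 * (v i t \<bullet> F i t) \<le> 0"
    proof (intro allI impI)
      fix i t assume i: "i < N" "(t::real) > 0" and
        fastest: "\<forall>j<N. v j t \<bullet> v j t \<le> v i t \<bullet> v i t" and fast: "?R\<^sup>2 < v i t \<bullet> v i t"
      have "?R\<^sup>2 < (norm (v i t))\<^sup>2" using fast by (simp add: power2_norm_eq_inner)
      hence "?R < norm (v i t)" by (rule power_less_imp_less_base) simp
      hence "\<Theta> powr (1/p) < norm (v i t)" by simp
      hence "\<theta> i t \<le> norm (v i t) powr p"
        using powr_inverse_less_imp_le_powr[OF assms(3)] temperature i by (meson less_imp_le order_trans)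
      moreover have "\<forall>j\<in>{..<N}. norm (v j t) \<le> norm (v i t)" using fastest by (simp add: norm_le)
      ultimately have "v i t \<bullet> F i t \<le> 0"
        unfolding F_def using assms(1,2,4)
        by (intro inner_alignment_friction_nonpos) auto
      thus "2 * (v i t \<bullet> F i t) \<le> 0" by simp
    qed
  qed
  have "?R \<ge> 0" by (meson max.coboundedI2 powr_ge_zero)
  show ?thesis
  proof (intro allI impI)
    fix i t assume "i < N" "(t::real) \<ge> 0"
    hence "(norm (v i t))\<^sup>2 \<le> ?R\<^sup>2" using bound_sq by (simp add: power2_norm_eq_inner)
    thus "norm (v i t) \<le> ?R" using \<open>?R \<ge> 0\<close> by (rule power2_le_imp_le)
  qed
qed

theorem mainTheorem4:
  fixes N :: nat and m :: "nat \<Rightarrow> real" and \<sigma> p \<kappa> :: real and \<phi> :: "real \<Rightarrow> real"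
    and x v :: "nat \<Rightarrow> real \<Rightarrow> real^'n" and \<theta> :: "nat \<Rightarrow> real \<Rightarrow> real"
  assumes "N \<ge> 1"
    and "\<forall>i<N. m i > 0"
    and "\<sigma> > 0" and "p > 0" and "\<kappa> \<ge> 0"
    and "smooth_on_real \<phi> {0..}"
    and "\<forall>r\<ge>0. \<phi> r > 0"
    and "\<forall>r s. 0 \<le> r \<longrightarrow> r \<le> s \<longrightarrow> \<phi> s \<le> \<phi> r"
    and "\<forall>i<N. \<theta> i 0 > 0"
    and "CSF_solution N m \<sigma> p \<kappa> \<phi> x v \<theta>"
  shows "\<exists>C. \<forall>t\<ge>0. \<forall>i<N. norm (v i t) \<le> C"
proof -
  have m: "\<forall>i<N. m i \<ge> 0" and \<phi>: "\<forall>r\<ge>0. \<phi> r \<ge> 0"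
    using assms(2,7) by (auto simp: less_imp_le)
  have "\<forall>i<N. \<forall>t\<ge>0. \<theta> i t \<le> Max ((\<lambda>j. \<theta> j 0) ` {..<N})"
    using CSF_temperature_le_initial_max[OF m assms(5) \<phi> assms(10)] .
  from CSF_speed_le[OF m _ assms(4) \<phi> this assms(10)] assms(3) show ?thesis by auto
qed

end
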